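(* Let $p$ be a prime, $r\in\mathbb{N}$, and $M\in\mathrm{Mat}(d,\mathbb{Z})$. For $s\in\mathbb{N}$ let $\mathrm{Per}_s(M)$ be the set of periodic points of $x\mapsto Mx\bmod p^s$ on $(\mathbb{Z}/p^s\mathbb{Z})^d$, $\ker_s(N)=\{x\in(\mathbb{Z}/p^s\mathbb{Z})^d: Nx\equiv0\pmod{p^s}\}$, and $m(s)$ the smallest $m\ge0$ with $M^{k+m}\equiv M^m\pmod{p^s}$ for some $k\ge1$. Then, as $\mathbb{F}_p$-vector spaces (modules over $\mathbb{Z}/p\mathbb{Z}$), $$\mathrm{Per}_r(M)/p\,\mathrm{Per}_r(M)\simeq\mathrm{Per}_1(M),\qquad \ker_r(M^{m(r)})/p\ker_r(M^{m(r)})\simeq\ker_1(M^{m(1)}),$$ and $$|\mathrm{Per}_r(M)|=p^{rd'}=|\mathrm{Per}_1(M)|^r,\qquad |\ker_r(M^{m(r)})|=p^{r(d-d')}=|\ker_1(M^{m(1)})|^r,$$ where $d'$ is the rank of the free $\mathbb{Z}/p^r\mathbb{Z}$-module $\mathrm{Per}_r(M)$.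
   Context: A point $x$ is periodic if $M^kx\equiv x$ for some $k\ge1$. $\mathrm{Per}_r(M)$ and $\ker_r(M^{m(r)})$ are free $\mathbb{Z}/p^r\mathbb{Z}$-modules with $(\mathbb{Z}/p^r\mathbb{Z})^d=\mathrm{Per}_r(M)\oplus\ker_r(M^{m(r)})$. *)

theory Defs
  imports "HOL-Analysis.Analysis" "HOL-Algebra.Coset"
begin

definition mpow :: "int^'d^'d \<Rightarrow> nat \<Rightarrow> int^'d^'d" where
  "mpow M n = ((\<lambda>A. M ** A) ^^ n) (mat 1)"

definition vred :: "int \<Rightarrow> nat \<Rightarrow> int^'d \<Rightarrow> int^'d" where
  "vred p s x = (\<chi> i. x $ i mod p ^ s)"

(* (Z/p^s Z)^d, represented by vectors with entries in {0..<p^s}. *)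
definition Vs :: "int \<Rightarrow> nat \<Rightarrow> (int^'d) set" where
  "Vs p s = {x. \<forall>i. 0 \<le> x $ i \<and> x $ i < p ^ s}"

definition Tmap :: "int \<Rightarrow> nat \<Rightarrow> int^'d^'d \<Rightarrow> int^'d \<Rightarrow> int^'d" where
  "Tmap p s M x = vred p s (M *v x)"

definition Per :: "int \<Rightarrow> nat \<Rightarrow> int^'d^'d \<Rightarrow> (int^'d) set" where
  "Per p s M = {x \<in> Vs p s. \<exists>k\<ge>1. (Tmap p s M ^^ k) x = x}"

definition Ker :: "int \<Rightarrow> nat \<Rightarrow> int^'d^'d \<Rightarrow> (int^'d) set" where
  "Ker p s N = {x \<in> Vs p s. vred p s (N *v x) = 0}"

definition mexp :: "int \<Rightarrow> nat \<Rightarrow> int^'d^'d \<Rightarrow> nat" where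
  "mexp p s M = (LEAST m. \<exists>k\<ge>1. \<forall>i j.
      (mpow M (k + m)) $ i $ j mod p ^ s = (mpow M m) $ i $ j mod p ^ s)"

definition vgrp :: "int \<Rightarrow> nat \<Rightarrow> (int^'d) monoid" where
  "vgrp p s = \<lparr>carrier = Vs p s, monoid.mult = (\<lambda>x y. vred p s (x + y)), one = 0\<rparr>"

definition subgrp :: "int \<Rightarrow> nat \<Rightarrow> (int^'d) set \<Rightarrow> (int^'d) monoid" where
  "subgrp p s S = (vgrp p s)\<lparr>carrier := S\<rparr>"

definition pmul :: "int \<Rightarrow> nat \<Rightarrow> (int^'d) set \<Rightarrow> (int^'d) set" where
  "pmul p s S = (\<lambda>x. vred p s (p *s x)) ` S"

definition free_rank :: "int \<Rightarrow> nat \<Rightarrow> (int^'d) set \<Rightarrow> nat \<Rightarrow> bool" where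
  "free_rank p s S e = (\<exists>b :: nat \<Rightarrow> int^'d. (\<forall>i<e. b i \<in> S) \<and>
     bij_betw (\<lambda>c. vred p s (\<Sum>i<e. c i *s b i))
       {c :: nat \<Rightarrow> int. (\<forall>i<e. 0 \<le> c i \<and> c i < p ^ s) \<and> (\<forall>i\<ge>e. c i = 0)} S)"

end

theory Submission
  imports Defs
begin

text \<open>
  The powers of \<open>M\<close> modulo \<open>p^r\<close> are eventually periodic, so a suitable power
  \<open>E = M^e\<close> is idempotent modulo \<open>p^r\<close>; choosing \<open>e\<close> beyond \<open>m(r)\<close> and \<open>m(1)\<close>,
  the periodic points are exactly the points fixed by \<open>E\<close> and \<open>ker(M^m(s))\<close> is
  exactly the set of points fixed by \<open>1 - E\<close>, both at level \<open>r\<close> and at level \<open>1\<close>.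
  For an idempotent \<open>E\<close> the module \<open>(\<int>/p^r)^d\<close> splits as \<open>Fix(E) \<times> Fix(1 - E)\<close>.
  A basis of the \<open>\<bbbF>\<^sub>p\<close>-space \<open>Fix\<^sub>1(E)\<close>, pushed into \<open>Fix\<^sub>r(E)\<close> by applying \<open>E\<close>,
  stays independent modulo every \<open>p^k\<close> (a relation can be divided by \<open>p\<close>) and
  spans \<open>Fix\<^sub>r(E)\<close> by successive \<open>p\<close>-adic approximation, so \<open>Fix\<^sub>r(E)\<close> is free of
  the same rank as \<open>Fix\<^sub>1(E)\<close>. Reduction modulo \<open>p\<close> maps \<open>Fix\<^sub>r(E)\<close> onto \<open>Fix\<^sub>1(E)\<close>
  with kernel \<open>p Fix\<^sub>r(E)\<close>; this gives the quotient isomorphisms, and counting gives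
  the cardinalities.
\<close>

section \<open>Congruences of integer vectors\<close>

definition vec_dvd :: "int \<Rightarrow> int^'d \<Rightarrow> bool" where
  "vec_dvd q v \<longleftrightarrow> (\<forall>i. q dvd v $ i)"

lemma vec_dvd_0 [simp]: "vec_dvd q 0"
  by (simp add: vec_dvd_def)

lemma vec_dvd_1 [simp]: "vec_dvd 1 v"
  by (simp add: vec_dvd_def)

lemma vec_dvd_add: "vec_dvd q x \<Longrightarrow> vec_dvd q y \<Longrightarrow> vec_dvd q (x + y)"
  by (simp add: vec_dvd_def)

lemma vec_dvd_diff: "vec_dvd q x \<Longrightarrow> vec_dvd q y \<Longrightarrow> vec_dvd q (x - y)"
  by (simp add: vec_dvd_def)

lemma vec_dvd_minus_iff: "vec_dvd q (- x) \<longleftrightarrow> vec_dvd q x"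
  by (simp add: vec_dvd_def)

lemma vec_dvd_smult: "vec_dvd q x \<Longrightarrow> vec_dvd q (c *s x)"
  by (simp add: vec_dvd_def)

lemma vec_dvd_smult_left: "q dvd c \<Longrightarrow> vec_dvd q (c *s x)"
  by (simp add: vec_dvd_def)

lemma vec_dvd_smult_mono: "vec_dvd q x \<Longrightarrow> vec_dvd (c * q) (c *s x)"
  by (auto simp: vec_dvd_def)

lemma vec_dvd_smult_cancel: "c \<noteq> 0 \<Longrightarrow> vec_dvd (c * q) (c *s x) \<Longrightarrow> vec_dvd q x"
  by (auto simp: vec_dvd_def)

lemma vec_dvd_mono: "q' dvd q \<Longrightarrow> vec_dvd q x \<Longrightarrow> vec_dvd q' x"
  by (meson dvd_trans vec_dvd_def)

lemma vec_dvd_matrix_vector_mult: "vec_dvd q x \<Longrightarrow> vec_dvd q (A *v x)"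
  by (simp add: vec_dvd_def matrix_vector_mult_def dvd_sum)

lemma vec_dvd_sum: "(\<And>i. i \<in> S \<Longrightarrow> vec_dvd q (f i)) \<Longrightarrow> vec_dvd q (sum f S)"
  by (simp add: vec_dvd_def dvd_sum)

lemma vec_dvd_diff_commute: "vec_dvd q (x - y) \<longleftrightarrow> vec_dvd q (y - x)"
  by (metis minus_diff_eq vec_dvd_minus_iff)

lemma vec_dvd_diff_trans: "vec_dvd q (x - y) \<Longrightarrow> vec_dvd q (y - z) \<Longrightarrow> vec_dvd q (x - z)"
  using vec_dvd_add[of q "x - y" "y - z"] by simp

lemma vec_dvdE:
  assumes "vec_dvd c x"
  obtains z where "x = c *s z"
proof
  show "x = c *s (\<chi> i. x $ i div c)"
    using assms by (auto simp: vec_dvd_def vec_eq_iff)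
qed

lemma matrix_vector_mult_smult: "A *v (c *s x) = c *s (A *v x)"
  for A :: "'a::comm_ring_1^'n^'m"
  by (simp add: vec_eq_iff matrix_vector_mult_def sum_distrib_left algebra_simps)

lemma vred_eq_iff: "vred p s x = vred p s y \<longleftrightarrow> vec_dvd (p^s) (x - y)"
  by (simp add: vred_def vec_dvd_def vec_eq_iff mod_eq_dvd_iff)

lemma vred_eq_0_iff: "vred p s x = 0 \<longleftrightarrow> vec_dvd (p^s) x"
  using vred_eq_iff[of p s x 0] by (simp add: vred_def vec_eq_iff)

lemma vred_0 [simp]: "vred p s 0 = 0"
  by (simp add: vred_eq_0_iff)

lemma vred_in_Vs: "p > 0 \<Longrightarrow> vred p s x \<in> Vs p s"
  by (simp add: vred_def Vs_def)

lemma vred_ident: "x \<in> Vs p s \<Longrightarrow> vred p s x = x"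
  by (simp add: vred_def Vs_def vec_eq_iff)

lemma vec_dvd_vred_diff: "vec_dvd (p^s) (vred p s x - x)"
  by (simp add: vred_eq_iff[symmetric] vred_def vec_eq_iff)

lemma vred_add_left: "vred p s (vred p s x + y) = vred p s (x + y)"
  using vec_dvd_vred_diff[of p s x] by (simp add: vred_eq_iff)

lemma vred_add_right: "vred p s (x + vred p s y) = vred p s (x + y)"
  using vred_add_left[of p s y x] by (simp add: add.commute)

lemma vred_matrix_vector_mult_vred: "vred p s (A *v vred p s x) = vred p s (A *v x)"
  unfolding vred_eq_iff matrix_vector_mult_diff_distrib[symmetric]
  by (rule vec_dvd_matrix_vector_mult[OF vec_dvd_vred_diff])

lemma vred_vred: "t \<le> s \<Longrightarrow> vred p t (vred p s x) = vred p t x"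
  unfolding vred_eq_iff by (rule vec_dvd_mono[OF le_imp_power_dvd vec_dvd_vred_diff])

section \<open>Linear combinations modulo \<open>q\<close>\<close>

definition coeff_box :: "int \<Rightarrow> nat \<Rightarrow> (nat \<Rightarrow> int) set" where
  "coeff_box q n = {c. (\<forall>i<n. 0 \<le> c i \<and> c i < q) \<and> (\<forall>i\<ge>n. c i = 0)}"

lemma bij_betw_restrict_coeff_box:
  "bij_betw (\<lambda>c. restrict c {..<n}) (coeff_box q n) (PiE {..<n} (\<lambda>_. {0..<q}))"
proof (rule bij_betwI[where g="\<lambda>f i. if i < n then f i else 0"])
  show "(\<lambda>c. restrict c {..<n}) \<in> coeff_box q n \<rightarrow> PiE {..<n} (\<lambda>_. {0..<q})"
    by (simp add: coeff_box_def PiE_iff)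
  show "(\<lambda>f i. if i < n then f i else 0) \<in> PiE {..<n} (\<lambda>_. {0..<q}) \<rightarrow> coeff_box q n"
    by (simp add: coeff_box_def PiE_iff)
  show "(\<lambda>i. if i < n then restrict c {..<n} i else 0) = c" if "c \<in> coeff_box q n" for c
    using that by (simp add: coeff_box_def fun_eq_iff)
  show "restrict (\<lambda>i. if i < n then f i else 0) {..<n} = f" if "f \<in> PiE {..<n} (\<lambda>_. {0..<q})" for f
    using that by (simp add: fun_eq_iff PiE_iff extensional_def)
qed

lemma card_coeff_box: "card (coeff_box q n) = nat q ^ n"
  using bij_betw_same_card[OF bij_betw_restrict_coeff_box[of n q]] by (simp add: card_PiE)

lemma bij_betw_vec_nth: "bij_betw vec_nth {x::'a^'d. \<forall>i. x $ i \<in> A} (PiE UNIV (\<lambda>_. A))"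
proof (rule bij_betwI[where g=vec_lambda])
  show "vec_nth \<in> {x::'a^'d. \<forall>i. x $ i \<in> A} \<rightarrow> PiE UNIV (\<lambda>_. A)"
    by (simp add: PiE_iff)
  show "vec_lambda \<in> PiE UNIV (\<lambda>_. A) \<rightarrow> {x::'a^'d. \<forall>i. x $ i \<in> A}"
    by (simp add: PiE_iff)
qed (simp_all add: fun_eq_iff)

lemma finite_vec_componentwise: "finite A \<Longrightarrow> finite {x::'a^'d. \<forall>i. x $ i \<in> A}"
  by (subst bij_betw_finite[OF bij_betw_vec_nth]) (simp add: finite_PiE)

lemma card_vec_componentwise: "card {x::'a^'d. \<forall>i. x $ i \<in> A} = card A ^ CARD('d)"
  using bij_betw_same_card[OF bij_betw_vec_nth] by (simp add: card_PiE)

lemma Vs_eq_componentwise: "Vs p s = {x::int^'d. \<forall>i. x $ i \<in> {0..<p^s}}"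
  by (auto simp: Vs_def)

lemma finite_Vs: "finite (Vs p s)"
  unfolding Vs_eq_componentwise by (rule finite_vec_componentwise) simp

lemma card_Vs: "card (Vs p s :: (int^'d) set) = nat (p^s) ^ CARD('d)"
  unfolding Vs_eq_componentwise card_vec_componentwise by simp

definition lincomb :: "nat \<Rightarrow> (nat \<Rightarrow> int) \<Rightarrow> (nat \<Rightarrow> int^'d) \<Rightarrow> int^'d" where
  "lincomb n c b = (\<Sum>i<n. c i *s b i)"

definition lin_indep_mod :: "int \<Rightarrow> nat \<Rightarrow> (nat \<Rightarrow> int^'d) \<Rightarrow> bool" where
  "lin_indep_mod q n b \<longleftrightarrow> (\<forall>c. vec_dvd q (lincomb n c b) \<longrightarrow> (\<forall>i<n. q dvd c i))"

definition in_span_mod :: "int \<Rightarrow> nat \<Rightarrow> (nat \<Rightarrow> int^'d) \<Rightarrow> int^'d \<Rightarrow> bool" where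
  "in_span_mod q n b y \<longleftrightarrow> (\<exists>c. vec_dvd q (y - lincomb n c b))"

lemma lincomb_diff_coeffs: "lincomb n c b - lincomb n c' b = lincomb n (\<lambda>i. c i - c' i) b"
  by (simp add: lincomb_def sum_subtractf[symmetric] vec_eq_iff algebra_simps)

lemma lincomb_diff_vectors: "lincomb n c b - lincomb n c b' = lincomb n c (\<lambda>i. b i - b' i)"
  by (simp add: lincomb_def sum_subtractf[symmetric] vec_eq_iff algebra_simps)

lemma lincomb_add_coeffs: "lincomb n c b + lincomb n c' b = lincomb n (\<lambda>i. c i + c' i) b"
  by (simp add: lincomb_def sum.distrib[symmetric] vec_eq_iff algebra_simps)

lemma lincomb_smult: "lincomb n (\<lambda>i. a * c i) b = a *s lincomb n c b"
  by (simp add: lincomb_def vec_eq_iff sum_distrib_left algebra_simps)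

lemma lincomb_cong_coeffs: "(\<And>i. i < n \<Longrightarrow> c i = c' i) \<Longrightarrow> lincomb n c b = lincomb n c' b"
  by (simp add: lincomb_def)

lemma lincomb_cong_vectors: "(\<And>i. i < n \<Longrightarrow> b i = b' i) \<Longrightarrow> lincomb n c b = lincomb n c b'"
  by (simp add: lincomb_def)

lemma lincomb_Suc: "lincomb (Suc n) c b = lincomb n c b + c n *s b n"
  by (simp add: lincomb_def)

lemma vec_dvd_lincomb_coeffs:
  "(\<And>i. i < n \<Longrightarrow> q dvd c i - c' i) \<Longrightarrow> vec_dvd q (lincomb n c b - lincomb n c' b)"
  unfolding lincomb_diff_coeffs unfolding lincomb_def
  by (rule vec_dvd_sum, rule vec_dvd_smult_left) simp

lemma vec_dvd_lincomb_vectors: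
  "(\<And>i. i < n \<Longrightarrow> vec_dvd q (b i - b' i)) \<Longrightarrow> vec_dvd q (lincomb n c b - lincomb n c b')"
  unfolding lincomb_diff_vectors unfolding lincomb_def
  by (rule vec_dvd_sum, rule vec_dvd_smult) simp

lemma int_eq_if_dvd_diff:
  "0 \<le> (a::int) \<Longrightarrow> a < q \<Longrightarrow> 0 \<le> b \<Longrightarrow> b < q \<Longrightarrow> q dvd a - b \<Longrightarrow> a = b"
  by (metis mod_eq_dvd_iff mod_pos_pos_trivial)

lemma inj_on_lincomb_coeff_box:
  assumes "lin_indep_mod (p^s) n b"
  shows "inj_on (\<lambda>c. vred p s (lincomb n c b)) (coeff_box (p^s) n)"
proof (rule inj_onI)
  fix c c' assume c: "c \<in> coeff_box (p^s) n" and c': "c' \<in> coeff_box (p^s) n"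
    and "vred p s (lincomb n c b) = vred p s (lincomb n c' b)"
  then have "vec_dvd (p^s) (lincomb n (\<lambda>i. c i - c' i) b)"
    by (simp add: vred_eq_iff lincomb_diff_coeffs)
  with assms have "\<forall>i<n. p^s dvd c i - c' i"
    unfolding lin_indep_mod_def by blast
  show "c = c'"
  proof
    fix i
    show "c i = c' i"
    proof (cases "i < n")
      case True
      with c c' \<open>\<forall>i<n. p^s dvd c i - c' i\<close> show ?thesis
        by (intro int_eq_if_dvd_diff[of _ "p^s"]) (auto simp: coeff_box_def)
    qed (use c c' in \<open>auto simp: coeff_box_def\<close>)
  qed
qed

lemma lin_indep_mod_le_CARD:
  assumes "p > 1" and "lin_indep_mod p n (b :: nat \<Rightarrow> int^'d)"
  shows "n \<le> CARD('d)"
proof -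
  let ?f = "\<lambda>c. vred p 1 (lincomb n c b)"
  have "inj_on ?f (coeff_box (p^1) n)"
    using assms(2) by (intro inj_on_lincomb_coeff_box) simp
  moreover have "?f ` coeff_box (p^1) n \<subseteq> Vs p 1"
    using assms(1) by (auto intro: vred_in_Vs)
  ultimately have "card (coeff_box (p^1) n) \<le> card (Vs p 1 :: (int^'d) set)"
    by (metis card_image card_mono finite_Vs)
  then have "nat p ^ n \<le> nat p ^ CARD('d)"
    by (simp add: card_coeff_box card_Vs)
  then show ?thesis
    by (rule power_le_imp_le_exp[rotated]) (use assms(1) in simp)
qed

lemma lin_indep_mod_prime_extend:
  assumes "prime p" and indep: "lin_indep_mod p n b" and y: "\<not> in_span_mod p n b y"
  shows "lin_indep_mod p (Suc n) (b(n := y))"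
  unfolding lin_indep_mod_def
proof (rule allI, rule impI)
  fix c assume "vec_dvd p (lincomb (Suc n) c (b(n := y)))"
  moreover have "lincomb n c (b(n := y)) = lincomb n c b"
    by (rule lincomb_cong_vectors) simp
  ultimately have h: "vec_dvd p (lincomb n c b + c n *s y)"
    by (simp add: lincomb_Suc)
  have "p dvd c n"
  proof (rule ccontr)
    \<comment> \<open>otherwise Bezout's identity for \<open>c n\<close> and \<open>p\<close> puts \<open>y\<close> in the span modulo \<open>p\<close>\<close>
    assume "\<not> p dvd c n"
    with assms(1) obtain u v where uv: "u * c n + v * p = 1"
      by (metis bezout_int coprime_iff_gcd_eq_1 gcd.commute prime_imp_coprime)
    have "y - lincomb n (\<lambda>i. - u * c i) b = u *s (lincomb n c b + c n *s y) + (v * p) *s y"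
    proof -
      have "y - lincomb n (\<lambda>i. - u * c i) b = (u * c n + v * p) *s y + u *s lincomb n c b"
        using uv lincomb_smult[of n "- u" c b] by (simp add: vector_smult_lneg)
      then show ?thesis
        by simp
    qed
    moreover have "vec_dvd p (u *s (lincomb n c b + c n *s y) + (v * p) *s y)"
      by (rule vec_dvd_add[OF vec_dvd_smult[OF h] vec_dvd_smult_left]) simp
    ultimately have "vec_dvd p (y - lincomb n (\<lambda>i. - u * c i) b)"
      by simp
    then have "in_span_mod p n b y"
      unfolding in_span_mod_def by blast
    with y show False ..
  qed
  then have "vec_dvd p (lincomb n c b)"
    using vec_dvd_diff[OF h vec_dvd_smult_left[OF \<open>p dvd c n\<close>, of y]] by simp
  with indep \<open>p dvd c n\<close> show "\<forall>i<Suc n. p dvd c i"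
    unfolding lin_indep_mod_def less_Suc_eq by blast
qed

lemma exists_spanning_lin_indep_mod_prime:
  fixes P :: "int^'d \<Rightarrow> bool"
  assumes "prime p"
  obtains n b where "\<forall>i<n. P (b i)" and "lin_indep_mod p n b"
    and "\<forall>y. P y \<longrightarrow> in_span_mod p n b y"
proof -
  define A where "A = {n. \<exists>b. (\<forall>i<n. P (b i)) \<and> lin_indep_mod p n b}"
  have A_iff: "n \<in> A \<longleftrightarrow> (\<exists>b. (\<forall>i<n. P (b i)) \<and> lin_indep_mod p n b)" for n
    by (simp add: A_def)
  have "0 \<in> A"
    by (auto simp: A_iff lin_indep_mod_def)
  moreover have "A \<subseteq> {..CARD('d)}"
    using lin_indep_mod_le_CARD[OF prime_gt_1_int[OF assms], where 'd='d] by (auto simp: A_iff)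
  then have "finite A"
    by (rule finite_subset) simp
  ultimately have "Max A \<in> A"
    by (intro Max_in) auto
  then obtain b where bP: "\<forall>i<Max A. P (b i)" and indep: "lin_indep_mod p (Max A) b"
    unfolding A_iff by blast
  have "in_span_mod p (Max A) b y" if "P y" for y
  proof (rule ccontr)
    assume "\<not> in_span_mod p (Max A) b y"
    then have "lin_indep_mod p (Suc (Max A)) (b(Max A := y))"
      by (rule lin_indep_mod_prime_extend[OF assms indep])
    moreover have "\<forall>i<Suc (Max A). P ((b(Max A := y)) i)"
      using bP \<open>P y\<close> by (simp add: less_Suc_eq)
    ultimately have "Suc (Max A) \<in> A"
      unfolding A_iff by blast
    with \<open>finite A\<close> show False
      using Max_ge not_less_eq_eq by blast
  qed
  with bP indep show thesis
    using that by blast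
qed

section \<open>Fixed points of matrices idempotent modulo \<open>p^s\<close>\<close>

definition mat_cong :: "int \<Rightarrow> int^'d^'d \<Rightarrow> int^'d^'d \<Rightarrow> bool" where
  "mat_cong q A B \<longleftrightarrow> (\<forall>x. vec_dvd q (A *v x - B *v x))"

definition idempotent_mod :: "int \<Rightarrow> int^'d^'d \<Rightarrow> bool" where
  "idempotent_mod q E \<longleftrightarrow> mat_cong q (E ** E) E"

definition fixed_mod :: "int \<Rightarrow> int^'d^'d \<Rightarrow> int^'d \<Rightarrow> bool" where
  "fixed_mod q E x \<longleftrightarrow> vec_dvd q (E *v x - x)"

definition fixed_points :: "int \<Rightarrow> nat \<Rightarrow> int^'d^'d \<Rightarrow> (int^'d) set" where
  "fixed_points p s E = {x \<in> Vs p s. fixed_mod (p^s) E x}"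

lemma mat_cong_refl: "mat_cong q A A"
  by (simp add: mat_cong_def)

lemma mat_cong_trans: "mat_cong q A B \<Longrightarrow> mat_cong q B C \<Longrightarrow> mat_cong q A C"
  unfolding mat_cong_def using vec_dvd_diff_trans by blast

lemma mat_cong_mult_left: "mat_cong q A B \<Longrightarrow> mat_cong q (C ** A) (C ** B)"
  unfolding mat_cong_def
  by (metis matrix_vector_mul_assoc matrix_vector_mult_diff_distrib vec_dvd_matrix_vector_mult)

lemma mat_cong_mono: "q' dvd q \<Longrightarrow> mat_cong q A B \<Longrightarrow> mat_cong q' A B"
  unfolding mat_cong_def using vec_dvd_mono by blast

lemma idempotent_mod_mono: "q' dvd q \<Longrightarrow> idempotent_mod q E \<Longrightarrow> idempotent_mod q' E"
  unfolding idempotent_mod_def by (rule mat_cong_mono)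

lemma idempotent_mod_complement:
  assumes "idempotent_mod q E"
  shows "idempotent_mod q (mat 1 - E)"
proof -
  have "((mat 1 - E) ** (mat 1 - E)) *v x - (mat 1 - E) *v x = (E ** E) *v x - E *v x" for x
    by (simp add: matrix_vector_mul_assoc[symmetric] matrix_vector_mult_diff_rdistrib
        matrix_vector_mult_diff_distrib)
  with assms show ?thesis
    by (simp add: idempotent_mod_def mat_cong_def)
qed

lemma fixed_mod_idempotent: "idempotent_mod q E \<Longrightarrow> fixed_mod q E (E *v x)"
  by (simp add: idempotent_mod_def mat_cong_def fixed_mod_def matrix_vector_mul_assoc)

lemma fixed_mod_complement_iff: "fixed_mod q (mat 1 - E) x \<longleftrightarrow> vec_dvd q (E *v x)"
  by (simp add: fixed_mod_def matrix_vector_mult_diff_rdistrib vec_dvd_minus_iff)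

lemma fixed_mod_0 [simp]: "fixed_mod q E 0"
  by (simp add: fixed_mod_def)

lemma fixed_mod_mono: "q' dvd q \<Longrightarrow> fixed_mod q E x \<Longrightarrow> fixed_mod q' E x"
  unfolding fixed_mod_def by (rule vec_dvd_mono)

lemma fixed_mod_add: "fixed_mod q E x \<Longrightarrow> fixed_mod q E y \<Longrightarrow> fixed_mod q E (x + y)"
  unfolding fixed_mod_def matrix_vector_right_distrib add_diff_add by (rule vec_dvd_add)

lemma fixed_mod_diff:
  assumes "fixed_mod q E x" and "fixed_mod q E y"
  shows "fixed_mod q E (x - y)"
proof -
  have eq: "E *v (x - y) - (x - y) = (E *v x - x) - (E *v y - y)"
    by (simp add: algebra_simps)
  from assms show ?thesis
    unfolding fixed_mod_def eq by (rule vec_dvd_diff)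
qed

lemma fixed_mod_smult: "fixed_mod q E x \<Longrightarrow> fixed_mod q E (c *s x)"
  unfolding fixed_mod_def
  using vec_dvd_smult[of q "E *v x - x" c]
  by (simp add: matrix_vector_mult_smult)

lemma fixed_mod_smult_cancel:
  "c \<noteq> 0 \<Longrightarrow> fixed_mod (c * q) E (c *s x) \<Longrightarrow> fixed_mod q E x"
  unfolding fixed_mod_def
  by (rule vec_dvd_smult_cancel) (simp_all add: matrix_vector_mult_smult)

lemma fixed_mod_cong: "vec_dvd q (x - y) \<Longrightarrow> fixed_mod q E y \<Longrightarrow> fixed_mod q E x"
proof -
  assume "vec_dvd q (x - y)" and "fixed_mod q E y"
  moreover have "E *v x - x = (E *v (x - y) - (x - y)) + (E *v y - y)"
    by (simp add: matrix_vector_mult_diff_distrib)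
  ultimately show ?thesis
    unfolding fixed_mod_def by (metis vec_dvd_add vec_dvd_diff vec_dvd_matrix_vector_mult)
qed

lemma fixed_mod_lincomb:
  "(\<And>i. i < n \<Longrightarrow> fixed_mod q E (b i)) \<Longrightarrow> fixed_mod q E (lincomb n c b)"
  by (induction n) (auto simp: lincomb_Suc lincomb_def[of 0] intro!: fixed_mod_add fixed_mod_smult)

lemma vred_in_fixed_points: "p > 0 \<Longrightarrow> fixed_mod (p^s) E x \<Longrightarrow> vred p s x \<in> fixed_points p s E"
  unfolding fixed_points_def using vred_in_Vs fixed_mod_cong[OF vec_dvd_vred_diff] by blast

lemma lin_indep_mod_cong:
  assumes "lin_indep_mod q n b" and "\<And>i. i < n \<Longrightarrow> vec_dvd q (B i - b i)"
  shows "lin_indep_mod q n B"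
  unfolding lin_indep_mod_def
proof (rule allI, rule impI)
  fix c assume "vec_dvd q (lincomb n c B)"
  from vec_dvd_diff[OF this vec_dvd_lincomb_vectors[of n q B b c, OF assms(2)]]
  have "vec_dvd q (lincomb n c b)"
    by simp
  with assms(1) show "\<forall>i<n. q dvd c i"
    unfolding lin_indep_mod_def by blast
qed

lemma in_span_mod_cong:
  assumes "in_span_mod q n b y" and "\<And>i. i < n \<Longrightarrow> vec_dvd q (B i - b i)"
  shows "in_span_mod q n B y"
proof -
  from assms(1) obtain c where "vec_dvd q (y - lincomb n c b)"
    unfolding in_span_mod_def by blast
  moreover have "vec_dvd q (lincomb n c B - lincomb n c b)"
    by (rule vec_dvd_lincomb_vectors[OF assms(2)])
  ultimately have "vec_dvd q (y - lincomb n c B)"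
    using vec_dvd_diff by fastforce
  then show ?thesis
    unfolding in_span_mod_def by blast
qed

lemma lin_indep_mod_power:
  assumes "p \<noteq> 0" and indep: "lin_indep_mod p n b"
  shows "lin_indep_mod (p^k) n b"
proof (induction k)
  case 0
  then show ?case
    by (simp add: lin_indep_mod_def)
next
  case (Suc k)
  show ?case
    unfolding lin_indep_mod_def
  proof (intro allI impI)
    fix c i assume h: "vec_dvd (p ^ Suc k) (lincomb n c b)" and "i < n"
    have "vec_dvd p (lincomb n c b)"
      using h by (rule vec_dvd_mono[rotated]) simp
    with indep have dvd: "\<forall>j<n. p dvd c j"
      unfolding lin_indep_mod_def by blast
    define c' where "c' j = c j div p" for j
    have "lincomb n c b = lincomb n (\<lambda>j. p * c' j) b"
      by (rule lincomb_cong_coeffs) (simp add: c'_def dvd)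
    with h have "vec_dvd (p * p^k) (p *s lincomb n c' b)"
      by (simp add: lincomb_smult)
    then have "vec_dvd (p^k) (lincomb n c' b)"
      by (rule vec_dvd_smult_cancel[OF assms(1)])
    with Suc.IH \<open>i < n\<close> have "p^k dvd c' i"
      unfolding lin_indep_mod_def by blast
    moreover have "c i = p * c' i"
      using dvd \<open>i < n\<close> by (simp add: c'_def)
    ultimately show "p ^ Suc k dvd c i"
      by simp
  qed
qed

lemma in_span_mod_power:
  assumes "p \<noteq> 0" and "k \<le> t"
    and fixed: "\<forall>i<n. fixed_mod (p^t) E (B i)"
    and span: "\<forall>y. fixed_mod p E y \<longrightarrow> in_span_mod p n B y"
    and "fixed_mod (p^k) E y"
  shows "in_span_mod (p^k) n B y"
  using assms(2,5)
proof (induction k arbitrary: y)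
  case 0
  then show ?case
    by (simp add: in_span_mod_def)
next
  case (Suc k)
  \<comment> \<open>approximate \<open>y\<close> modulo \<open>p\<close>, then the error divided by \<open>p\<close> modulo \<open>p^k\<close>\<close>
  have "fixed_mod p E y"
    using Suc.prems(2) by (rule fixed_mod_mono[rotated]) simp
  with span obtain a where "vec_dvd p (y - lincomb n a B)"
    unfolding in_span_mod_def by blast
  then obtain z where z: "y - lincomb n a B = p *s z"
    by (rule vec_dvdE)
  have "fixed_mod (p ^ Suc k) E (lincomb n a B)"
    using fixed le_imp_power_dvd[OF Suc.prems(1)] by (auto intro: fixed_mod_lincomb fixed_mod_mono)
  with Suc.prems(2) have "fixed_mod (p * p^k) E (p *s z)"
    unfolding z[symmetric] by (simp add: fixed_mod_diff)
  then have "fixed_mod (p^k) E z"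
    by (rule fixed_mod_smult_cancel[OF assms(1)])
  with Suc.IH Suc.prems(1) obtain c where "vec_dvd (p^k) (z - lincomb n c B)"
    unfolding in_span_mod_def by auto
  then have "vec_dvd (p * p^k) (p *s (z - lincomb n c B))"
    by (rule vec_dvd_smult_mono)
  moreover have "p *s (z - lincomb n c B) = y - lincomb n (\<lambda>i. a i + p * c i) B"
    using z by (simp add: lincomb_add_coeffs[symmetric] lincomb_smult algebra_simps)
  ultimately show ?case
    unfolding in_span_mod_def by auto
qed

lemma free_rank_fixed_pointsI:
  assumes "p > 0"
    and basis: "\<forall>i<n. B i \<in> fixed_points p s E"
    and indep: "lin_indep_mod (p^s) n B"
    and span: "\<forall>y. fixed_mod (p^s) E y \<longrightarrow> in_span_mod (p^s) n B y"
  shows "free_rank p s (fixed_points p s E) n"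
proof -
  let ?f = "\<lambda>c. vred p s (lincomb n c B)"
  have "?f ` coeff_box (p^s) n \<subseteq> fixed_points p s E"
  proof (rule image_subsetI)
    fix c
    have "fixed_mod (p^s) E (lincomb n c B)"
      using basis by (intro fixed_mod_lincomb) (simp add: fixed_points_def)
    then show "?f c \<in> fixed_points p s E"
      by (rule vred_in_fixed_points[OF assms(1)])
  qed
  moreover have "fixed_points p s E \<subseteq> ?f ` coeff_box (p^s) n"
  proof
    fix y assume y: "y \<in> fixed_points p s E"
    with span obtain c where c: "vec_dvd (p^s) (y - lincomb n c B)"
      unfolding fixed_points_def in_span_mod_def by blast
    define c' where "c' i = (if i < n then c i mod p^s else 0)" for i
    have "c' \<in> coeff_box (p^s) n"
      using assms(1) by (auto simp: c'_def coeff_box_def)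
    moreover have "vec_dvd (p^s) (lincomb n c' B - lincomb n c B)"
      by (rule vec_dvd_lincomb_coeffs) (simp add: c'_def mod_eq_dvd_iff[symmetric])
    with c have "?f c' = vred p s y"
      unfolding vred_eq_iff vec_dvd_diff_commute[of _ "lincomb n c' B"]
      using vec_dvd_diff_trans by blast
    ultimately show "y \<in> ?f ` coeff_box (p^s) n"
      using y by (force simp: fixed_points_def vred_ident)
  qed
  ultimately have "bij_betw ?f (coeff_box (p^s) n) (fixed_points p s E)"
    using inj_on_lincomb_coeff_box[OF indep] by (auto simp: bij_betw_def)
  with basis show ?thesis
    unfolding free_rank_def coeff_box_def lincomb_def by blast
qed

lemma free_rank_fixed_points_lift:
  assumes "p > 0" and "t \<ge> 1" and idem: "idempotent_mod (p^t) E"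
    and fixed: "\<forall>i<n. fixed_mod p E (b i)" and indep: "lin_indep_mod p n b"
    and span: "\<forall>y. fixed_mod p E y \<longrightarrow> in_span_mod p n b y"
  shows "free_rank p t (fixed_points p t E) n"
proof -
  have "p dvd p^t"
    using assms(2) by simp
  define B where "B i = vred p t (E *v b i)" for i
  have basis: "B i \<in> fixed_points p t E" for i
    unfolding B_def by (rule vred_in_fixed_points[OF \<open>p > 0\<close> fixed_mod_idempotent[OF idem]])
  have B_cong: "vec_dvd p (B i - b i)" if "i < n" for i
  proof -
    have "vec_dvd p (B i - E *v b i)"
      unfolding B_def by (rule vec_dvd_mono[OF \<open>p dvd p^t\<close> vec_dvd_vred_diff])
    moreover have "vec_dvd p (E *v b i - b i)"
      using fixed that by (simp add: fixed_mod_def)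
    ultimately show ?thesis
      by (rule vec_dvd_diff_trans)
  qed
  have "lin_indep_mod (p^t) n B"
    using \<open>p > 0\<close> lin_indep_mod_cong[OF indep B_cong] by (simp add: lin_indep_mod_power)
  moreover have "in_span_mod (p^t) n B y" if "fixed_mod (p^t) E y" for y
  proof (rule in_span_mod_power[OF _ order_refl _ _ that])
    show "p \<noteq> 0"
      using \<open>p > 0\<close> by simp
    show "\<forall>i<n. fixed_mod (p^t) E (B i)"
      using basis by (simp add: fixed_points_def)
    show "\<forall>y. fixed_mod p E y \<longrightarrow> in_span_mod p n B y"
      using span B_cong in_span_mod_cong by blast
  qed
  ultimately show ?thesis
    using basis by (intro free_rank_fixed_pointsI[OF \<open>p > 0\<close>]) auto
qed

lemma free_rank_fixed_points_idempotent:
  assumes "prime p" and "r \<ge> 1" and idem: "idempotent_mod (p^r) E"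
  obtains n where "free_rank p r (fixed_points p r E) n"
    and "free_rank p 1 (fixed_points p 1 E) n"
proof -
  obtain n b where "\<forall>i<n. fixed_mod p E (b i)" and "lin_indep_mod p n b"
    and "\<forall>y. fixed_mod p E y \<longrightarrow> in_span_mod p n b y"
    by (rule exists_spanning_lin_indep_mod_prime[OF assms(1)])
  moreover have "idempotent_mod (p^1) E"
    using assms(2) by (intro idempotent_mod_mono[OF _ idem]) simp
  ultimately show thesis
    using that free_rank_fixed_points_lift[OF prime_gt_0_int[OF assms(1)]] assms(2) idem by blast
qed

lemma card_free_rank:
  assumes "p > 0" and "free_rank p s S n"
  shows "card S = nat (p ^ (s * n))"
proof -
  from assms(2) obtain f where "bij_betw f (coeff_box (p^s) n) S"
    unfolding free_rank_def coeff_box_def by blast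
  then have "card S = nat (p^s) ^ n"
    by (simp add: bij_betw_same_card[symmetric] card_coeff_box)
  with assms(1) show ?thesis
    by (simp add: nat_power_eq power_mult)
qed

lemma free_rank_unique:
  assumes "p > 1" and "s \<ge> 1" and "free_rank p s S n" and "free_rank p s S n'"
  shows "n = n'"
  using card_free_rank[OF _ assms(3)] card_free_rank[OF _ assms(4)] assms(1,2)
  by (auto simp: nat_power_eq)

lemma vred_idempotent_add:
  assumes "fixed_mod (p^s) E x" and "fixed_mod (p^s) (mat 1 - E) y"
  shows "vred p s (E *v (x + y)) = vred p s x"
proof -
  have eq: "E *v (x + y) - x = (E *v x - x) + E *v y"
    by (simp add: matrix_vector_right_distrib)
  from assms(1) assms(2)[unfolded fixed_mod_complement_iff] show ?thesis
    unfolding vred_eq_iff eq fixed_mod_def by (rule vec_dvd_add)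
qed

lemma card_Vs_idempotent_split:
  fixes E :: "int^'d^'d"
  assumes "p > 0" and idem: "idempotent_mod (p^s) E"
  shows "card (Vs p s :: (int^'d) set)
    = card (fixed_points p s E) * card (fixed_points p s (mat 1 - E))"
proof -
  define F where "F = mat 1 - E"
  have idem': "idempotent_mod (p^s) F"
    unfolding F_def by (rule idempotent_mod_complement[OF idem])
  have "bij_betw (\<lambda>x. (vred p s (E *v x), vred p s (F *v x)))
      (Vs p s) (fixed_points p s E \<times> fixed_points p s F)"
  proof (rule bij_betwI[where g="\<lambda>(x, y). vred p s (x + y)"])
    show "(\<lambda>x. (vred p s (E *v x), vred p s (F *v x))) \<in> Vs p s \<rightarrow> fixed_points p s E \<times> fixed_points p s F"
      using idem idem' by (auto intro!: vred_in_fixed_points[OF assms(1)] fixed_mod_idempotent)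
    show "(\<lambda>(x, y). vred p s (x + y)) \<in> fixed_points p s E \<times> fixed_points p s F \<rightarrow> Vs p s"
      using assms(1) by (auto intro: vred_in_Vs)
    show "(\<lambda>(x, y). vred p s (x + y)) (vred p s (E *v x), vred p s (F *v x)) = x" if "x \<in> Vs p s" for x
      using that by (simp add: vred_add_left vred_add_right F_def matrix_vector_mult_diff_rdistrib vred_ident)
    show "(\<lambda>x. (vred p s (E *v x), vred p s (F *v x))) ((\<lambda>(x, y). vred p s (x + y)) xy) = xy"
      if xy_in: "xy \<in> fixed_points p s E \<times> fixed_points p s F" for xy
    proof -
      obtain x y where xy: "xy = (x, y)" and x: "x \<in> fixed_points p s E" and y: "y \<in> fixed_points p s F"
        using xy_in by blast
      have "vred p s (E *v (x + y)) = x"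
        using x y vred_idempotent_add[of p s E x y]
        by (simp add: F_def fixed_points_def vred_ident)
      moreover have "vred p s (F *v (x + y)) = y"
        using x y vred_idempotent_add[of p s F y x]
        by (simp add: F_def fixed_points_def vred_ident add.commute)
      ultimately show ?thesis
        by (simp add: xy vred_matrix_vector_mult_vred)
    qed
  qed
  from bij_betw_same_card[OF this] show ?thesis
    by (simp add: card_cartesian_product F_def)
qed

lemma free_rank_complement:
  fixes E :: "int^'d^'d"
  assumes "p > 1" and "s \<ge> 1" and idem: "idempotent_mod (p^s) E"
    and "free_rank p s (fixed_points p s E) a"
    and "free_rank p s (fixed_points p s (mat 1 - E)) b"
  shows "a + b = CARD('d)"
proof -
  have "nat p ^ (s * CARD('d)) = card (Vs p s :: (int^'d) set)"
    using assms(1) by (simp add: card_Vs nat_power_eq power_mult)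
  also have "\<dots> = nat p ^ (s * a) * nat p ^ (s * b)"
    using card_Vs_idempotent_split[OF _ idem] card_free_rank[OF _ assms(4)]
      card_free_rank[OF _ assms(5)] assms(1)
    by (simp add: nat_power_eq)
  finally have "nat p ^ (s * CARD('d)) = nat p ^ (s * a) * nat p ^ (s * b)" .
  then have "s * CARD('d) = s * (a + b)"
    using assms(1) by (simp add: power_add[symmetric] add_mult_distrib2)
  with assms(2) show ?thesis
    by simp
qed

lemma card_fixed_points_idempotent:
  fixes E :: "int^'d^'d"
  assumes "prime p" and "r \<ge> 1" and idem: "idempotent_mod (p^r) E"
  obtains a where "free_rank p r (fixed_points p r E) a"
    and "card (fixed_points p r E) = nat (p ^ (r * a))"
    and "card (fixed_points p r E) = card (fixed_points p 1 E) ^ r"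
    and "card (fixed_points p r (mat 1 - E)) = nat (p ^ (r * (CARD('d) - a)))"
    and "card (fixed_points p r (mat 1 - E)) = card (fixed_points p 1 (mat 1 - E)) ^ r"
proof -
  have "p > 1"
    using assms(1) by (rule prime_gt_1_int)
  then have "p > 0"
    by simp
  have idem': "idempotent_mod (p^r) (mat 1 - E)"
    by (rule idempotent_mod_complement[OF idem])
  obtain a where a: "free_rank p r (fixed_points p r E) a" "free_rank p 1 (fixed_points p 1 E) a"
    by (rule free_rank_fixed_points_idempotent[OF assms(1,2) idem])
  obtain b where b: "free_rank p r (fixed_points p r (mat 1 - E)) b"
      "free_rank p 1 (fixed_points p 1 (mat 1 - E)) b"
    by (rule free_rank_fixed_points_idempotent[OF assms(1,2) idem'])
  have "CARD('d) - a = b"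
    using free_rank_complement[OF \<open>p > 1\<close> assms(2) idem a(1) b(1)] by simp
  with \<open>p > 0\<close> show thesis
    using card_free_rank[OF \<open>p > 0\<close> a(1)] card_free_rank[OF \<open>p > 0\<close> a(2)]
      card_free_rank[OF \<open>p > 0\<close> b(1)] card_free_rank[OF \<open>p > 0\<close> b(2)]
    by (intro that[OF a(1)]) (simp_all add: nat_power_eq power_mult[symmetric] mult.commute)
qed

section \<open>Reduction of fixed points modulo \<open>p\<close>\<close>

lemma vgrp_comm_group:
  assumes "p > 0"
  shows "comm_group (vgrp p s :: (int^'d) monoid)"
proof (rule comm_groupI)
  fix x y z :: "int^'d"
  show "x \<otimes>\<^bsub>vgrp p s\<^esub> y \<in> carrier (vgrp p s)"
    by (simp add: vgrp_def vred_in_Vs[OF assms])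
  show "\<one>\<^bsub>vgrp p s\<^esub> \<in> carrier (vgrp p s)"
    using assms by (simp add: vgrp_def Vs_def)
  show "x \<otimes>\<^bsub>vgrp p s\<^esub> y \<otimes>\<^bsub>vgrp p s\<^esub> z = x \<otimes>\<^bsub>vgrp p s\<^esub> (y \<otimes>\<^bsub>vgrp p s\<^esub> z)"
    by (simp add: vgrp_def vred_add_left vred_add_right add.assoc)
  show "x \<otimes>\<^bsub>vgrp p s\<^esub> y = y \<otimes>\<^bsub>vgrp p s\<^esub> x"
    by (simp add: vgrp_def add.commute)
  show "x \<in> carrier (vgrp p s) \<Longrightarrow> \<one>\<^bsub>vgrp p s\<^esub> \<otimes>\<^bsub>vgrp p s\<^esub> x = x"
    by (simp add: vgrp_def vred_ident)
  show "x \<in> carrier (vgrp p s) \<Longrightarrow> \<exists>y\<in>carrier (vgrp p s). y \<otimes>\<^bsub>vgrp p s\<^esub> x = \<one>\<^bsub>vgrp p s\<^esub>"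
    by (rule bexI[where x="vred p s (- x)"]) (simp_all add: vgrp_def vred_add_left vred_in_Vs[OF assms])
qed

lemma subgroup_fixed_points:
  assumes "p > 0"
  shows "subgroup (fixed_points p s E) (vgrp p s :: (int^'d) monoid)"
proof -
  interpret comm_group "vgrp p s :: (int^'d) monoid"
    by (rule vgrp_comm_group[OF assms])
  show ?thesis
  proof (rule subgroupI)
    show "fixed_points p s E \<subseteq> carrier (vgrp p s)"
      by (auto simp: fixed_points_def vgrp_def)
    show "fixed_points p s E \<noteq> {}"
      using vred_in_fixed_points[OF assms fixed_mod_0] by blast
  next
    fix x assume x: "x \<in> fixed_points p s E"
    have "inv\<^bsub>vgrp p s\<^esub> x = vred p s (- x)"
      by (rule inv_equality)
        (use x in \<open>simp_all add: vgrp_def vred_add_left vred_in_Vs[OF assms] fixed_points_def\<close>)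
    moreover have "fixed_mod (p^s) E (0 - x)"
      using x by (intro fixed_mod_diff) (simp_all add: fixed_points_def)
    ultimately show "inv\<^bsub>vgrp p s\<^esub> x \<in> fixed_points p s E"
      using vred_in_fixed_points[OF assms] by simp
  next
    fix x y assume "x \<in> fixed_points p s E" and "y \<in> fixed_points p s E"
    then have "fixed_mod (p^s) E (x + y)"
      by (intro fixed_mod_add) (simp_all add: fixed_points_def)
    then show "x \<otimes>\<^bsub>vgrp p s\<^esub> y \<in> fixed_points p s E"
      using vred_in_fixed_points[OF assms] by (simp add: vgrp_def)
  qed
qed

lemma group_subgrp_fixed_points:
  "p > 0 \<Longrightarrow> group (subgrp p s (fixed_points p s E) :: (int^'d) monoid)"
  unfolding subgrp_def
  by (rule subgroup.subgroup_is_group[OF subgroup_fixed_points])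
    (auto intro: comm_group.axioms(2) vgrp_comm_group)

lemma vred_fixed_points_image:
  assumes "p > 0" and "t \<le> s" and idem: "idempotent_mod (p^s) E"
  shows "vred p t ` fixed_points p s E = fixed_points p t E"
proof
  have dvd: "p^t dvd p^s"
    using assms(2) by (rule le_imp_power_dvd)
  show "vred p t ` fixed_points p s E \<subseteq> fixed_points p t E"
  proof (rule image_subsetI)
    fix x assume "x \<in> fixed_points p s E"
    then have "fixed_mod (p^t) E x"
      by (simp add: fixed_points_def fixed_mod_mono[OF dvd])
    then show "vred p t x \<in> fixed_points p t E"
      by (rule vred_in_fixed_points[OF assms(1)])
  qed
  show "fixed_points p t E \<subseteq> vred p t ` fixed_points p s E"
  proof
    fix y assume y: "y \<in> fixed_points p t E"
    have "vred p s (E *v y) \<in> fixed_points p s E"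
      by (rule vred_in_fixed_points[OF assms(1) fixed_mod_idempotent[OF idem]])
    moreover have "vred p t (vred p s (E *v y)) = y"
    proof -
      have "vec_dvd (p^t) (vred p s (E *v y) - E *v y)"
        by (rule vec_dvd_mono[OF dvd vec_dvd_vred_diff])
      moreover have "vec_dvd (p^t) (E *v y - y)"
        using y by (simp add: fixed_points_def fixed_mod_def)
      ultimately have "vred p t (vred p s (E *v y)) = vred p t y"
        unfolding vred_eq_iff by (rule vec_dvd_diff_trans)
      with y show ?thesis
        by (simp add: fixed_points_def vred_ident)
    qed
    ultimately show "y \<in> vred p t ` fixed_points p s E"
      by (metis image_eqI)
  qed
qed

lemma pmul_fixed_pointsI:
  assumes "p > 0" and "s \<ge> 1" and idem: "idempotent_mod (p^s) E"
    and x: "x \<in> fixed_points p s E" and "vec_dvd p x"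
  shows "x \<in> pmul p s (fixed_points p s E)"
proof -
  obtain w where xw: "x = p *s w"
    using \<open>vec_dvd p x\<close> by (rule vec_dvdE)
  obtain s' where s': "s = Suc s'"
    using assms(2) by (cases s) auto
  from x have "fixed_mod (p^s) E x"
    by (simp add: fixed_points_def)
  then have "fixed_mod (p * p^s') E (p *s w)"
    by (simp only: xw s' power_Suc)
  then have w: "fixed_mod (p^s') E w"
    by (rule fixed_mod_smult_cancel[rotated]) (use assms(1) in simp)
  define z where "z = vred p s (E *v w)"
  have z: "z \<in> fixed_points p s E"
    unfolding z_def by (rule vred_in_fixed_points[OF assms(1) fixed_mod_idempotent[OF idem]])
  have "vec_dvd (p^s') (z - E *v w)"
    unfolding z_def by (rule vec_dvd_mono[OF _ vec_dvd_vred_diff]) (simp add: s')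
  then have "vec_dvd (p^s') (z - w)"
    using w unfolding fixed_mod_def by (rule vec_dvd_diff_trans)
  then have "vec_dvd (p * p^s') (p *s (z - w))"
    by (rule vec_dvd_smult_mono)
  then have "vred p s (p *s z) = vred p s x"
    by (simp add: vred_eq_iff s' xw)
  with x z show ?thesis
    unfolding pmul_def by (auto simp: fixed_points_def vred_ident)
qed

lemma pmul_fixed_pointsD:
  assumes "p > 0" and "s \<ge> 1" and "x \<in> pmul p s (fixed_points p s E)"
  shows "x \<in> fixed_points p s E" and "vec_dvd p x"
proof -
  from assms(3) obtain z where z: "z \<in> fixed_points p s E" and x: "x = vred p s (p *s z)"
    unfolding pmul_def by blast
  from z show "x \<in> fixed_points p s E"
    unfolding x by (intro vred_in_fixed_points[OF assms(1)] fixed_mod_smult) (simp add: fixed_points_def)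
  have "vec_dvd p (x - p *s z)"
    unfolding x using assms(2) by (intro vec_dvd_mono[OF _ vec_dvd_vred_diff]) simp
  then have "vec_dvd p (x - p *s z + p *s z)"
    by (rule vec_dvd_add) (simp add: vec_dvd_smult_left)
  then show "vec_dvd p x"
    by simp
qed

lemma vred_fixed_points_kernel:
  assumes "p > 0" and "s \<ge> 1" and "idempotent_mod (p^s) E"
  shows "{x \<in> fixed_points p s E. vred p 1 x = 0} = pmul p s (fixed_points p s E)"
  using pmul_fixed_pointsI[OF assms] pmul_fixed_pointsD[OF assms(1,2)]
  by (auto simp: vred_eq_0_iff)

lemma fixed_points_quotient_iso:
  fixes E :: "int^'d^'d"
  assumes "p > 0" and "s \<ge> 1" and idem: "idempotent_mod (p^s) E"
  shows "subgrp p s (fixed_points p s E) Mod pmul p s (fixed_points p s E)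
    \<cong> subgrp p 1 (fixed_points p 1 E)"
proof -
  let ?G = "subgrp p s (fixed_points p s E)" and ?H = "subgrp p 1 (fixed_points p 1 E)"
  have image: "vred p 1 ` carrier ?G = carrier ?H"
    using vred_fixed_points_image[OF assms(1,2) idem] by (simp add: subgrp_def vgrp_def)
  have "vred p 1 \<in> hom ?G ?H"
  proof (rule homI)
    show "vred p 1 x \<in> carrier ?H" if "x \<in> carrier ?G" for x
      using image that by blast
    show "vred p 1 (x \<otimes>\<^bsub>?G\<^esub> y) = vred p 1 x \<otimes>\<^bsub>?H\<^esub> vred p 1 y" for x y
      using assms(2) by (simp add: subgrp_def vgrp_def vred_vred vred_add_left vred_add_right)
  qed
  then have "group_hom ?G ?H (vred p 1)"
    using group_subgrp_fixed_points[OF assms(1), where 'd='d]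
    by (simp add: group_hom_def group_hom_axioms_def)
  then have "?G Mod kernel ?G ?H (vred p 1) \<cong> ?H"
    using image by (rule group_hom.FactGroup_iso)
  moreover have "kernel ?G ?H (vred p 1) = pmul p s (fixed_points p s E)"
    using vred_fixed_points_kernel[OF assms] by (simp add: kernel_def subgrp_def vgrp_def)
  ultimately show ?thesis
    by simp
qed

section \<open>Periodic points and kernels as fixed points of a power of \<open>M\<close>\<close>

lemma mpow_0 [simp]: "mpow M 0 = mat 1"
  by (simp add: mpow_def)

lemma mpow_Suc: "mpow M (Suc n) = M ** mpow M n"
  by (simp add: mpow_def)

lemma mpow_add: "mpow M (m + n) = mpow M m ** mpow M n"
  by (induction m) (simp_all add: mpow_Suc matrix_mul_assoc)

lemma mat_cong_if_entries:
  assumes "\<forall>i j. A $ i $ j mod q = B $ i $ j mod q"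
  shows "mat_cong q A B"
  unfolding mat_cong_def vec_dvd_def
proof (intro allI)
  fix x i
  have "(A *v x - B *v x) $ i = (\<Sum>j\<in>UNIV. (A $ i $ j - B $ i $ j) * x $ j)"
    by (simp add: matrix_vector_mult_def sum_subtractf algebra_simps)
  moreover have "q dvd (\<Sum>j\<in>UNIV. (A $ i $ j - B $ i $ j) * x $ j)"
    using assms by (intro dvd_sum) (simp add: mod_eq_dvd_iff)
  ultimately show "q dvd (A *v x - B *v x) $ i"
    by simp
qed

lemma mpow_mod_eventually_periodic:
  fixes M :: "int^'d^'d"
  assumes "p > 0"
  shows "\<exists>m k. k \<ge> 1 \<and> (\<forall>i j. mpow M (k + m) $ i $ j mod p^s = mpow M m $ i $ j mod p^s)"
proof -
  define f where "f n = (\<chi> i j. mpow M n $ i $ j mod p^s)" for n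
  have "range f \<subseteq> {A :: int^'d^'d. \<forall>i. A $ i \<in> Vs p s}"
    using assms by (auto simp: f_def Vs_def)
  moreover have "finite {A :: int^'d^'d. \<forall>i. A $ i \<in> Vs p s}"
    by (rule finite_vec_componentwise[OF finite_Vs])
  ultimately have "\<not> inj f"
    using finite_subset finite_imageD infinite_UNIV_nat by blast
  then obtain a b where "a < b" and "f a = f b"
    unfolding inj_def by (metis linorder_neqE_nat)
  then show ?thesis
    by (intro exI[of _ a] exI[of _ "b - a"]) (simp add: f_def vec_eq_iff)
qed

lemma mexp_cong:
  assumes "p > 0"
  shows "\<exists>k\<ge>1. mat_cong (p^s) (mpow M (mexp p s M + k)) (mpow M (mexp p s M))"
proof -
  have "\<exists>k\<ge>1. \<forall>i j. mpow M (k + mexp p s M) $ i $ j mod p^s = mpow M (mexp p s M) $ i $ j mod p^s"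
    unfolding mexp_def by (rule LeastI_ex) (use mpow_mod_eventually_periodic[OF assms] in blast)
  then show ?thesis
    by (metis add.commute mat_cong_if_entries)
qed

lemma mat_cong_mpow_periodic:
  assumes period: "mat_cong q (mpow M (m + k)) (mpow M m)" and "m \<le> n"
  shows "mat_cong q (mpow M (n + t * k)) (mpow M n)"
proof (induction t)
  case 0
  then show ?case
    by (simp add: mat_cong_refl)
next
  case (Suc t)
  have "mat_cong q (mpow M ((n + t * k - m) + (m + k))) (mpow M ((n + t * k - m) + m))"
    using mat_cong_mult_left[OF period, of "mpow M (n + t * k - m)"] by (simp only: mpow_add)
  moreover have "(n + t * k - m) + (m + k) = n + Suc t * k" and "(n + t * k - m) + m = n + t * k"
    using assms(2) by simp_all
  ultimately have "mat_cong q (mpow M (n + Suc t * k)) (mpow M (n + t * k))"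
    by simp
  then show ?case
    using Suc.IH by (rule mat_cong_trans)
qed

lemma mat_cong_mpow_idempotent:
  assumes "idempotent_mod q (mpow M e)"
  shows "mat_cong q (mpow M (Suc j * e)) (mpow M e)"
proof (induction j)
  case 0
  then show ?case
    by (simp add: mat_cong_refl)
next
  case (Suc j)
  have "mat_cong q (mpow M (Suc (Suc j) * e)) (mpow M e ** mpow M e)"
    using mat_cong_mult_left[OF Suc.IH, of "mpow M e"] by (simp add: mpow_add[symmetric])
  then show ?case
    using assms unfolding idempotent_mod_def by (rule mat_cong_trans)
qed

lemma Tmap_funpow: "x \<in> Vs p s \<Longrightarrow> (Tmap p s M ^^ n) x = vred p s (mpow M n *v x)"
  by (induction n)
    (simp_all add: vred_ident Tmap_def mpow_Suc vred_matrix_vector_mult_vred matrix_vector_mul_assoc)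

lemma Per_eq_fixed_points:
  assumes "e \<ge> 1" and idem: "idempotent_mod (p^s) (mpow M e)"
  shows "Per p s M = fixed_points p s (mpow M e)"
proof
  show "Per p s M \<subseteq> fixed_points p s (mpow M e)"
  proof
    fix x assume "x \<in> Per p s M"
    then obtain k where x: "x \<in> Vs p s" and "k \<ge> 1" and period: "(Tmap p s M ^^ k) x = x"
      unfolding Per_def by blast
    have "((Tmap p s M ^^ k) ^^ e) x = x" for e
      by (induction e) (simp_all add: period)
    then have "vred p s (mpow M (k * e) *v x) = x"
      using Tmap_funpow[OF x] by (simp add: funpow_mult)
    moreover obtain j where "k = Suc j"
      using \<open>k \<ge> 1\<close> by (cases k) auto
    then have "vred p s (mpow M (k * e) *v x) = vred p s (mpow M e *v x)"
      using mat_cong_mpow_idempotent[OF idem, of j] unfolding vred_eq_iff mat_cong_def by blast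
    ultimately have "vec_dvd (p^s) (mpow M e *v x - x)"
      using vec_dvd_vred_diff[of p s "mpow M e *v x"] by (simp add: vec_dvd_diff_commute)
    with x show "x \<in> fixed_points p s (mpow M e)"
      by (simp add: fixed_points_def fixed_mod_def)
  qed
  show "fixed_points p s (mpow M e) \<subseteq> Per p s M"
  proof
    fix x assume "x \<in> fixed_points p s (mpow M e)"
    then have x: "x \<in> Vs p s" and "vec_dvd (p^s) (mpow M e *v x - x)"
      by (simp_all add: fixed_points_def fixed_mod_def)
    then have "(Tmap p s M ^^ e) x = x"
      by (simp add: Tmap_funpow vred_ident flip: vred_eq_iff[of p s "mpow M e *v x" x])
    with x assms(1) show "x \<in> Per p s M"
      unfolding Per_def by blast
  qed
qed

lemma Ker_eq_fixed_points:
  assumes period: "mat_cong (p^s) (mpow M (m + k)) (mpow M m)" and "k \<ge> 1" and "m \<le> e"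
  shows "Ker p s (mpow M m) = fixed_points p s (mat 1 - mpow M e)"
proof -
  have "vec_dvd (p^s) (mpow M m *v x) \<longleftrightarrow> vec_dvd (p^s) (mpow M e *v x)" for x
  proof
    assume "vec_dvd (p^s) (mpow M m *v x)"
    then have "vec_dvd (p^s) (mpow M (e - m) *v (mpow M m *v x))"
      by (rule vec_dvd_matrix_vector_mult)
    with \<open>m \<le> e\<close> show "vec_dvd (p^s) (mpow M e *v x)"
      by (simp add: matrix_vector_mul_assoc mpow_add[symmetric])
  next
    assume Ex: "vec_dvd (p^s) (mpow M e *v x)"
    have "m + e * k = (m + e * k - e) + e"
      using \<open>k \<ge> 1\<close> by (simp add: trans_le_add2)
    then have "mpow M (m + e * k) = mpow M (m + e * k - e) ** mpow M e"
      by (metis mpow_add)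
    then have "vec_dvd (p^s) (mpow M (m + e * k) *v x)"
      using vec_dvd_matrix_vector_mult[OF Ex] by (simp add: matrix_vector_mul_assoc[symmetric])
    moreover have "vec_dvd (p^s) (mpow M (m + e * k) *v x - mpow M m *v x)"
      using mat_cong_mpow_periodic[OF period order_refl, of e] unfolding mat_cong_def by blast
    ultimately show "vec_dvd (p^s) (mpow M m *v x)"
      using vec_dvd_diff by fastforce
  qed
  then show ?thesis
    by (auto simp: Ker_def fixed_points_def fixed_mod_complement_iff vred_eq_0_iff)
qed

lemma idempotent_power_decomposition:
  fixes M :: "int^'d^'d"
  assumes "p > 0" and "r \<ge> 1"
  obtains E where "idempotent_mod (p^r) E"
    and "Per p r M = fixed_points p r E" and "Per p 1 M = fixed_points p 1 E"
    and "Ker p r (mpow M (mexp p r M)) = fixed_points p r (mat 1 - E)"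
    and "Ker p 1 (mpow M (mexp p 1 M)) = fixed_points p 1 (mat 1 - E)"
proof -
  obtain kr where "kr \<ge> 1" and period_r: "mat_cong (p^r) (mpow M (mexp p r M + kr)) (mpow M (mexp p r M))"
    using mexp_cong[OF assms(1)] by blast
  obtain k1 where "k1 \<ge> 1" and period_1: "mat_cong (p^1) (mpow M (mexp p 1 M + k1)) (mpow M (mexp p 1 M))"
    using mexp_cong[OF assms(1)] by blast
  \<comment> \<open>a multiple of the period at level \<open>r\<close> beyond both preperiods\<close>
  define e where "e = (mexp p r M + mexp p 1 M + 1) * kr"
  have "mexp p r M + mexp p 1 M + 1 \<le> e"
    using mult_le_mono2[OF \<open>kr \<ge> 1\<close>, of "mexp p r M + mexp p 1 M + 1"] by (simp add: e_def)
  then have "e \<ge> 1" and "mexp p r M \<le> e" and "mexp p 1 M \<le> e"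
    by simp_all
  have idem: "idempotent_mod (p^r) (mpow M e)"
    using mat_cong_mpow_periodic[OF period_r \<open>mexp p r M \<le> e\<close>, of "mexp p r M + mexp p 1 M + 1"]
    by (simp add: idempotent_mod_def mpow_add[symmetric] e_def)
  moreover have "idempotent_mod (p^1) (mpow M e)"
    using assms(2) by (intro idempotent_mod_mono[OF _ idem]) simp
  ultimately show thesis
    using that Per_eq_fixed_points[OF \<open>e \<ge> 1\<close>]
      Ker_eq_fixed_points[OF period_r \<open>kr \<ge> 1\<close> \<open>mexp p r M \<le> e\<close>]
      Ker_eq_fixed_points[OF period_1 \<open>k1 \<ge> 1\<close> \<open>mexp p 1 M \<le> e\<close>]
    by blast
qed

theorem corollary3p9:
  fixes p :: int and r :: nat and M :: "int^'d^'d"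
  assumes "prime p" and "r \<ge> 1"
  shows "subgrp p r (Per p r M) Mod pmul p r (Per p r M) \<cong> subgrp p 1 (Per p 1 M)
    \<and> subgrp p r (Ker p r (mpow M (mexp p r M))) Mod pmul p r (Ker p r (mpow M (mexp p r M)))
        \<cong> subgrp p 1 (Ker p 1 (mpow M (mexp p 1 M)))
    \<and> (\<exists>d'. free_rank p r (Per p r M) d')
    \<and> (\<forall>d'. free_rank p r (Per p r M) d' \<longrightarrow>
         card (Per p r M) = nat (p ^ (r * d'))
       \<and> card (Per p r M) = card (Per p 1 M) ^ r
       \<and> card (Ker p r (mpow M (mexp p r M))) = nat (p ^ (r * (CARD('d) - d')))
       \<and> card (Ker p r (mpow M (mexp p r M))) = card (Ker p 1 (mpow M (mexp p 1 M))) ^ r)"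
proof -
  have "p > 1"
    using assms(1) by (rule prime_gt_1_int)
  then have "p > 0"
    by simp
  obtain E where idem: "idempotent_mod (p^r) E"
    and Per: "Per p r M = fixed_points p r E" "Per p 1 M = fixed_points p 1 E"
    and Ker: "Ker p r (mpow M (mexp p r M)) = fixed_points p r (mat 1 - E)"
      "Ker p 1 (mpow M (mexp p 1 M)) = fixed_points p 1 (mat 1 - E)"
    by (rule idempotent_power_decomposition[OF \<open>p > 0\<close> assms(2)])
  obtain a where rank: "free_rank p r (fixed_points p r E) a"
    and "card (fixed_points p r E) = nat (p ^ (r * a))"
    and "card (fixed_points p r E) = card (fixed_points p 1 E) ^ r"
    and "card (fixed_points p r (mat 1 - E)) = nat (p ^ (r * (CARD('d) - a)))"
    and "card (fixed_points p r (mat 1 - E)) = card (fixed_points p 1 (mat 1 - E)) ^ r"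
    by (rule card_fixed_points_idempotent[OF assms idem])
  moreover have "d' = a" if "free_rank p r (fixed_points p r E) d'" for d'
    using free_rank_unique[OF \<open>p > 1\<close> assms(2) that rank] .
  ultimately show ?thesis
    using fixed_points_quotient_iso[OF \<open>p > 0\<close> assms(2) idem]
      fixed_points_quotient_iso[OF \<open>p > 0\<close> assms(2) idempotent_mod_complement[OF idem]]
    unfolding Per Ker by blast
qed

end
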